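(* Let $d\ge1$, $\beta\in[0,1]$, $0<\lambda<\Lambda$, $T>0$, $\delta,\tau,r\in(0,1]$ and $(x_0,v_0)\in\mathbb{T}^d\times\mathbb{R}^d$. Let $h$ be a classical solution with $0\le h\le\Lambda$ of \[ (\partial_t+v\cdot\nabla_x)h=\mathscr{R}_h(t,x)\,(\nabla_v-v)\cdot\nabla_vh,\qquad \mathscr{R}_h=\Big(\int_{\mathbb{R}^d}h\,d\mu\Big)^\beta, \] in $(0,T]\times\mathbb{T}^d\times\mathbb{R}^d$ with $h(0,x,v)\ge\delta\mathbb{1}_{\{|x-x_0|<r,\,|v-v_0|<r/\tau\}}$. Then there is a constant $c_0>0$ depending only on $d,\beta,\lambda,\Lambda$ such that $h\ge\frac\delta8\mathbb{1}_{\mathcal{P}}$, where \[ \mathcal{P}=\Big\{(t,x,v):\ t\le\min\{T,\tau,c_0\langle\tau r^{-1}\rangle^{-2}\langle v_0\rangle^{-2}\},\ |x-x_0-tv|<\tfrac r2,\ |v-v_0|<\tfrac{r}{2\tau}\Big\}. \]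
   Context: $\langle y\rangle=(1+|y|^2)^{1/2}$; $\mathbb{T}^d$ is the unit-volume torus with its distance; $d\mu=(2\pi)^{-d/2}e^{-|v|^2/2}dv$. A classical solution is nonnegative, satisfies the equation pointwise and matches the initial data continuously. *)

theory Defs
  imports "HOL-Analysis.Analysis"
begin

text \<open>Points of the unit-volume torus are represented by points of the Euclidean space;
  integer lattice vectors:\<close>
definition int_vec :: "real^'n \<Rightarrow> bool" where
  "int_vec k \<longleftrightarrow> (\<forall>i. k $ i \<in> \<int>)"

definition torus_dist :: "real^'n \<Rightarrow> real^'n \<Rightarrow> real" where
  "torus_dist x y = (INF k \<in> {k. int_vec k}. norm (x - y - k))"

definition jbr :: "real \<Rightarrow> real" where
  "jbr y = sqrt (1 + y\<^sup>2)"

definition gauss :: "real^'n \<Rightarrow> real" where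
  "gauss v = (2 * pi) powr (- real CARD('n) / 2) * exp (- (norm v)\<^sup>2 / 2)"

definition mu_mass :: "(real \<Rightarrow> real^'n \<Rightarrow> real^'n \<Rightarrow> real) \<Rightarrow> real \<Rightarrow> real^'n \<Rightarrow> real" where
  "mu_mass h t x = (\<integral>v. h t x v * gauss v \<partial>lborel)"

text \<open>Diffusion coefficient R_h = (int h dmu)^beta, with the convention y^0 = 1.\<close>
definition Rcoef :: "real \<Rightarrow> (real \<Rightarrow> real^'n \<Rightarrow> real^'n \<Rightarrow> real) \<Rightarrow> real \<Rightarrow> real^'n \<Rightarrow> real" where
  "Rcoef \<beta> h t x = (if \<beta> = 0 then 1 else (mu_mass h t x) powr \<beta>)"

text \<open>Classical solution on (0,T] x T^d x R^d (functions periodic in x): nonnegative,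
  jointly continuous on [0,T] x T^d x R^d (so it matches the initial datum h(0,.,.) continuously),
  and the equation
   d_t h + v . grad_x h = R_h (Delta_v h - v . grad_v h)
  holds pointwise, with pointwise (Frechet) derivatives.\<close>
definition classical_solution ::
  "real \<Rightarrow> real \<Rightarrow> (real \<Rightarrow> real^'n \<Rightarrow> real^'n \<Rightarrow> real) \<Rightarrow> bool" where
  "classical_solution \<beta> T h \<longleftrightarrow>
     (\<forall>t x v k. int_vec k \<longrightarrow> h t (x + k) v = h t x v) \<and>
     (\<forall>t\<in>{0..T}. \<forall>x v. 0 \<le> h t x v) \<and>
     continuous_on ({0..T} \<times> UNIV \<times> UNIV) (\<lambda>(t, x, v). h t x v) \<and>
     (\<exists>ht gx gv Hv. \<forall>t\<in>{0<..T}. \<forall>x v.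
        ((\<lambda>s. h s x v) has_real_derivative ht t x v) (at t within {0..T}) \<and>
        ((\<lambda>y. h t y v) has_derivative (\<lambda>y. gx t x v \<bullet> y)) (at x) \<and>
        ((\<lambda>w. h t x w) has_derivative (\<lambda>w. gv t x v \<bullet> w)) (at v) \<and>
        ((\<lambda>w. gv t x w) has_derivative Hv t x v) (at v) \<and>
        ht t x v + v \<bullet> gx t x v =
          Rcoef \<beta> h t x * ((\<Sum>i\<in>UNIV. Hv t x v (axis i 1) $ i) - v \<bullet> gv t x v))"

end

theory Submission
  imports Defs "HOL-Probability.Distributions"
begin

(*
  Comparison with an explicit barrier.  Put
    psi(t,x,v) = delta (1 - |x - x0 - t v|^2 / r^2 - tau^2 |v - v0|^2 / r^2 - kappa t).
  Free transport annihilates |x - x0 - t v|^2, so (d_t + v.grad_x) psi = - delta kappa, whereas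
  (Delta_v - v.grad_v) psi >= - delta B with B = O(<tau/r>^2 <v0>^2) wherever psi > 0 and t <= tau.
  Since 0 <= R_h <= max 1 (Lam * int gauss), psi is a strict subsolution once kappa exceeds this
  bound times B.  If h - psi became negative, its minimum over a compact box would be attained at
  some t > 0 (initially psi <= delta <= h on the support of psi), in the interior in x and v; there
  the time derivative of h - psi is <= 0, its gradients vanish and its v-Hessian is positive
  semidefinite, which contradicts the equation.  So h >= psi, and psi > delta/8 on the set P as
  long as kappa t <= 3/8; with kappa of order <tau/r>^2 <v0>^2 this is what the constraint
  t <= c0 <tau/r>^-2 <v0>^-2 ensures.
*)

lemma integrable_exp_minus_square_half: "integrable lborel (\<lambda>x::real. exp (- x\<^sup>2 / 2))"
proof -
  have "integrable lborel (\<lambda>x. sqrt (2 * pi) * std_normal_density x)"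
    by simp
  then show ?thesis
    by (simp add: std_normal_density_def)
qed

lemma gauss_integrable: "integrable lborel (gauss :: real^'n \<Rightarrow> real)"
proof -
  have exp_norm: "exp (- (norm v)\<^sup>2 / 2) = (\<Prod>b\<in>Basis. exp (- (v \<bullet> b)\<^sup>2 / 2))" for v :: "real^'n"
  proof -
    have "(norm v)\<^sup>2 = (\<Sum>b\<in>Basis. (v \<bullet> b)\<^sup>2)"
      by (subst power2_norm_eq_inner, subst euclidean_inner) (simp add: power2_eq_square)
    then have "- (norm v)\<^sup>2 / 2 = (\<Sum>b\<in>Basis. - (v \<bullet> b)\<^sup>2 / 2)"
      by (simp add: sum_divide_distrib sum_negf)
    then show ?thesis
      by (simp add: exp_sum)
  qed
  have "(\<integral>\<^sup>+v. ennreal (exp (- (norm (v::real^'n))\<^sup>2 / 2)) \<partial>lborel)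
        = (\<integral>\<^sup>+v. (\<Prod>b\<in>(Basis::(real^'n) set). ennreal (exp (- (v \<bullet> b)\<^sup>2 / 2))) \<partial>lborel)"
    by (rule nn_integral_cong, subst exp_norm, rule prod_ennreal[symmetric]) simp
  also have "\<dots> = (\<Prod>b\<in>(Basis::(real^'n) set). (\<integral>\<^sup>+x. ennreal (exp (- x\<^sup>2 / 2)) \<partial>lborel))"
    by (rule nn_integral_lborel_prod) auto
  also have "\<dots> < \<infinity>"
    using integrable_exp_minus_square_half
    by (simp add: integrable_iff_bounded power_less_top_ennreal)
  finally have "integrable lborel (\<lambda>v::real^'n. exp (- (norm v)\<^sup>2 / 2))"
    by (intro integrableI_bounded) auto
  then show ?thesis
    unfolding gauss_def[abs_def] by simp
qed

lemma gauss_nonneg: "0 \<le> gauss v"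
  by (simp add: gauss_def)

lemma mu_mass_nonneg:
  assumes "\<And>v. 0 \<le> h t x v"
  shows "0 \<le> mu_mass h t x"
  unfolding mu_mass_def using assms gauss_nonneg by (intro integral_nonneg_AE AE_I2 mult_nonneg_nonneg)

lemma mu_mass_le:
  fixes h :: "real \<Rightarrow> real^'n \<Rightarrow> real^'n \<Rightarrow> real"
  assumes "\<And>v. 0 \<le> h t x v" "\<And>v. h t x v \<le> Lam"
  shows "mu_mass h t x \<le> Lam * integral\<^sup>L lborel (gauss :: real^'n \<Rightarrow> real)"
proof (cases "integrable lborel (\<lambda>v. h t x v * gauss v)")
  case True
  have "mu_mass h t x \<le> integral\<^sup>L lborel (\<lambda>v::real^'n. Lam * gauss v)"
    unfolding mu_mass_def
    by (rule integral_mono[OF True]) (auto intro: gauss_integrable mult_right_mono assms gauss_nonneg)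
  then show ?thesis by simp
next
  case False
  have "0 \<le> Lam" using assms[of 0] by linarith
  moreover have "0 \<le> integral\<^sup>L lborel (gauss :: real^'n \<Rightarrow> real)"
    by (intro integral_nonneg_AE) (simp add: gauss_nonneg)
  ultimately show ?thesis
    using False by (simp add: mu_mass_def not_integrable_integral_eq)
qed

lemma Rcoef_nonneg: "0 \<le> Rcoef \<beta> h t x"
  by (simp add: Rcoef_def)

lemma Rcoef_le:
  fixes h :: "real \<Rightarrow> real^'n \<Rightarrow> real^'n \<Rightarrow> real"
  assumes "0 \<le> \<beta>" "\<beta> \<le> 1" "\<And>v. 0 \<le> h t x v" "\<And>v. h t x v \<le> Lam"
  shows "Rcoef \<beta> h t x \<le> max 1 (Lam * integral\<^sup>L lborel (gauss :: real^'n \<Rightarrow> real))"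
proof -
  have m: "0 \<le> mu_mass h t x" "mu_mass h t x \<le> Lam * integral\<^sup>L lborel (gauss :: real^'n \<Rightarrow> real)"
    using mu_mass_nonneg mu_mass_le assms(3,4) by blast+
  have "mu_mass h t x powr \<beta> \<le> max 1 (mu_mass h t x)"
  proof (cases "mu_mass h t x \<le> 1")
    case True
    then show ?thesis using m assms(1) powr_le1[of \<beta> "mu_mass h t x"] by auto
  next
    case False
    then have "mu_mass h t x powr \<beta> \<le> mu_mass h t x powr 1"
      using assms(2) by (intro powr_mono) auto
    then show ?thesis using False by simp
  qed
  then show ?thesis
    using m unfolding Rcoef_def by auto
qed

lemma torus_dist_le_norm: "torus_dist x y \<le> norm (x - y)"
proof -
  have "int_vec 0" by (simp add: int_vec_def)
  then have "torus_dist x y \<le> norm (x - y - 0)"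
    unfolding torus_dist_def by (intro cINF_lower) (auto intro: bdd_belowI[of _ 0])
  then show ?thesis by simp
qed

lemma torus_dist_lessE:
  assumes "torus_dist x y < a"
  obtains k where "int_vec k" "norm (x - y - k) < a"
proof -
  have "int_vec 0" by (simp add: int_vec_def)
  then have "\<not> (\<forall>k. int_vec k \<longrightarrow> a \<le> norm (x - y - k))"
    using assms unfolding torus_dist_def by (metis (mono_tags, lifting) cINF_greatest empty_iff mem_Collect_eq not_le)
  then show ?thesis
    using that by force
qed

lemma jbr_pos: "0 < jbr y"
  by (simp add: jbr_def add_pos_nonneg)

lemma power2_jbr: "(jbr y)\<^sup>2 = 1 + y\<^sup>2"
  by (simp add: jbr_def add_nonneg_nonneg)

lemma jbr_powr_minus_two: "jbr y powr (-2) = 1 / (jbr y)\<^sup>2"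
  using jbr_pos[of y] by (simp add: powr_minus divide_inverse powr_numeral)

lemma has_real_derivative_left_min_nonpos:
  fixes f :: "real \<Rightarrow> real"
  assumes f': "(f has_real_derivative D) (at t within {a..b})" and "a < t" "t \<le> b"
    and min: "\<And>s. a \<le> s \<Longrightarrow> s \<le> t \<Longrightarrow> f t \<le> f s"
  shows "D \<le> 0"
proof (rule ccontr)
  assume "\<not> D \<le> 0"
  then obtain e where "e > 0" and e: "\<And>h. h > 0 \<Longrightarrow> t - h \<in> {a..b} \<Longrightarrow> h < e \<Longrightarrow> f (t - h) < f t"
    using has_real_derivative_pos_inc_left[OF f'] by force
  define h where "h = min e (t - a) / 2"
  have "h > 0" "h < e" "t - h \<in> {a..b}"
    using \<open>e > 0\<close> assms(2,3) by (auto simp: h_def min_def field_simps)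
  then show False
    using e[of h] min[of "t - h"] by auto
qed

lemma local_min_second_derivative_nonneg:
  fixes f f' :: "real \<Rightarrow> real"
  assumes f': "\<And>s. (f has_real_derivative f' s) (at s)"
    and f'': "(f' has_real_derivative c) (at 0)"
    and min: "eventually (\<lambda>s. f 0 \<le> f s) (nhds 0)"
  shows "0 \<le> c"
proof (rule ccontr)
  assume "\<not> 0 \<le> c"
  obtain e where "e > 0" and e: "\<And>s. \<bar>s\<bar> < e \<Longrightarrow> f 0 \<le> f s"
    using min unfolding eventually_nhds_metric by (auto simp: dist_real_def)
  have "f' 0 = 0"
    using DERIV_local_min[OF f' \<open>e > 0\<close>] e by auto
  obtain d where "d > 0" and d: "\<And>h. h > 0 \<Longrightarrow> h < d \<Longrightarrow> f' (0 + h) < f' 0"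
    using has_real_derivative_neg_dec_right[OF f''] \<open>\<not> 0 \<le> c\<close> by force
  define s where "s = min d e / 2"
  have s: "0 < s" "s < d" "s < e"
    using \<open>d > 0\<close> \<open>e > 0\<close> by (auto simp: s_def)
  obtain z where z: "0 < z" "z < s" "f s - f 0 = (s - 0) * f' z"
    using MVT2[of 0 s f f'] s f' by (auto simp: DERIV_def)
  have "f' z < 0"
    using d[of z] z s \<open>f' 0 = 0\<close> by simp
  then have "f s < f 0"
    using z s mult_pos_neg[of s "f' z"] by simp
  then show False
    using e[of s] s by simp
qed

lemma local_min_gradient_eq_0:
  fixes f :: "'a::real_inner \<Rightarrow> real"
  assumes "(f has_derivative (\<lambda>u. g \<bullet> u)) (at x)" and min: "eventually (\<lambda>y. f x \<le> f y) (nhds x)"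
  shows "g = 0"
proof -
  have "eventually (\<lambda>y. f x \<le> f y) (at x)"
    using min unfolding eventually_at_filter by (auto elim: eventually_mono)
  then have "(\<lambda>u. g \<bullet> u) = (\<lambda>u. 0)"
    using has_derivative_local_min[OF assms(1)] by blast
  then show ?thesis
    by (metis inner_eq_zero_iff)
qed

lemma local_min_hessian_nonneg:
  fixes f :: "'a::real_inner \<Rightarrow> real"
  assumes f': "\<And>y. (f has_derivative (\<lambda>u. g y \<bullet> u)) (at y)"
    and f'': "(g has_derivative H) (at x)"
    and min: "eventually (\<lambda>y. f x \<le> f y) (nhds x)"
  shows "0 \<le> H u \<bullet> u"
proof (rule local_min_second_derivative_nonneg)
  show "((\<lambda>s. f (x + s *\<^sub>R u)) has_real_derivative g (x + s *\<^sub>R u) \<bullet> u) (at s)" for s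
    unfolding has_field_derivative_def
    by (rule has_derivative_compose[where f="\<lambda>s. x + s *\<^sub>R u", OF _ f', THEN has_derivative_eq_rhs])
       (auto intro!: derivative_eq_intros simp: fun_eq_iff)
  have "linear H"
    using f'' has_derivative_linear by blast
  have "((\<lambda>s. g (x + s *\<^sub>R u)) has_derivative (\<lambda>s. H (s *\<^sub>R u))) (at 0)"
    by (rule has_derivative_compose[where f="\<lambda>s. x + s *\<^sub>R u"]) (use f'' in \<open>auto intro!: derivative_eq_intros\<close>)
  then show "((\<lambda>s. g (x + s *\<^sub>R u) \<bullet> u) has_real_derivative H u \<bullet> u) (at 0)"
    unfolding has_field_derivative_def
    by (auto intro!: derivative_eq_intros elim!: has_derivative_eq_rhs
             simp: fun_eq_iff linear_scale[OF \<open>linear H\<close>] mult.commute)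
  have "((\<lambda>s. x + s *\<^sub>R u) \<longlongrightarrow> x + 0 *\<^sub>R u) (nhds 0)"
    by (intro tendsto_add tendsto_const tendsto_scaleR filterlim_ident)
  then show "eventually (\<lambda>s. f (x + 0 *\<^sub>R u) \<le> f (x + s *\<^sub>R u)) (nhds 0)"
    using eventually_compose_filterlim[OF min] by simp
qed

lemma solution_touching_from_below:
  fixes h \<phi> :: "real \<Rightarrow> real^'n \<Rightarrow> real^'n \<Rightarrow> real"
  assumes "0 < t" "t \<le> T"
    and h_t: "((\<lambda>s. h s x v) has_real_derivative ht) (at t within {0..T})"
    and \<phi>_t: "((\<lambda>s. \<phi> s x v) has_real_derivative \<phi>t) (at t within {0..T})"
    and h_x: "((\<lambda>y. h t y v) has_derivative (\<lambda>u. hx \<bullet> u)) (at x)"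
    and \<phi>_x: "((\<lambda>y. \<phi> t y v) has_derivative (\<lambda>u. \<phi>x \<bullet> u)) (at x)"
    and h_v: "\<And>w. ((\<lambda>w. h t x w) has_derivative (\<lambda>u. hv w \<bullet> u)) (at w)"
    and \<phi>_v: "\<And>w. ((\<lambda>w. \<phi> t x w) has_derivative (\<lambda>u. \<phi>v w \<bullet> u)) (at w)"
    and h_vv: "(hv has_derivative hH) (at v)"
    and \<phi>_vv: "(\<phi>v has_derivative \<phi>H) (at v)"
    and pde: "ht + v \<bullet> hx = R * ((\<Sum>i\<in>UNIV. hH (axis i 1) $ i) - v \<bullet> hv v)"
    and "0 \<le> R"
    and min_t: "\<And>s. 0 \<le> s \<Longrightarrow> s \<le> t \<Longrightarrow> h t x v - \<phi> t x v \<le> h s x v - \<phi> s x v"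
    and min_x: "eventually (\<lambda>y. h t x v - \<phi> t x v \<le> h t y v - \<phi> t y v) (nhds x)"
    and min_v: "eventually (\<lambda>w. h t x v - \<phi> t x v \<le> h t x w - \<phi> t x w) (nhds v)"
  shows "R * ((\<Sum>i\<in>UNIV. \<phi>H (axis i 1) $ i) - v \<bullet> \<phi>v v) \<le> \<phi>t + v \<bullet> \<phi>x"
proof -
  have "ht \<le> \<phi>t"
    using has_real_derivative_left_min_nonpos[OF DERIV_diff[OF h_t \<phi>_t] \<open>0 < t\<close> \<open>t \<le> T\<close> min_t]
    by simp
  have "hx - \<phi>x = 0"
    by (rule local_min_gradient_eq_0[OF has_derivative_diff[OF h_x \<phi>_x, THEN has_derivative_eq_rhs] min_x])
       (simp add: fun_eq_iff inner_diff_left)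
  have hv_\<phi>v: "((\<lambda>w. h t x w - \<phi> t x w) has_derivative (\<lambda>u. (hv w - \<phi>v w) \<bullet> u)) (at w)" for w
    by (rule has_derivative_diff[OF h_v \<phi>_v, THEN has_derivative_eq_rhs]) (simp add: fun_eq_iff inner_diff_left)
  have "hv v - \<phi>v v = 0"
    by (rule local_min_gradient_eq_0[OF hv_\<phi>v min_v])
  have "(\<Sum>i\<in>UNIV. \<phi>H (axis i 1) $ i) \<le> (\<Sum>i\<in>UNIV. hH (axis i 1) $ i)"
  proof (rule sum_mono)
    fix i
    have "0 \<le> (hH (axis i 1) - \<phi>H (axis i 1)) \<bullet> axis i 1"
      by (rule local_min_hessian_nonneg[OF hv_\<phi>v has_derivative_diff[OF h_vv \<phi>_vv] min_v])
    then show "\<phi>H (axis i 1) $ i \<le> hH (axis i 1) $ i"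
      by (simp add: inner_axis)
  qed
  then have "R * ((\<Sum>i\<in>UNIV. \<phi>H (axis i 1) $ i) - v \<bullet> \<phi>v v) \<le> R * ((\<Sum>i\<in>UNIV. hH (axis i 1) $ i) - v \<bullet> hv v)"
    using \<open>hv v - \<phi>v v = 0\<close> \<open>0 \<le> R\<close> by (intro mult_left_mono) auto
  also have "\<dots> = ht + v \<bullet> hx"
    by (rule pde[symmetric])
  also have "\<dots> \<le> \<phi>t + v \<bullet> \<phi>x"
    using \<open>ht \<le> \<phi>t\<close> \<open>hx - \<phi>x = 0\<close> by simp
  finally show ?thesis .
qed

lemma classical_solution_touching_from_below:
  fixes h \<phi> :: "real \<Rightarrow> real^'n \<Rightarrow> real^'n \<Rightarrow> real"
  assumes sol: "classical_solution \<beta> T h" and "0 < t" "t \<le> T"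
    and \<phi>_t: "((\<lambda>s. \<phi> s x v) has_real_derivative \<phi>t) (at t within {0..T})"
    and \<phi>_x: "((\<lambda>y. \<phi> t y v) has_derivative (\<lambda>u. \<phi>x \<bullet> u)) (at x)"
    and \<phi>_v: "\<And>w. ((\<lambda>w. \<phi> t x w) has_derivative (\<lambda>u. \<phi>v w \<bullet> u)) (at w)"
    and \<phi>_vv: "(\<phi>v has_derivative \<phi>H) (at v)"
    and min_t: "\<And>s. 0 \<le> s \<Longrightarrow> s \<le> t \<Longrightarrow> h t x v - \<phi> t x v \<le> h s x v - \<phi> s x v"
    and min_x: "eventually (\<lambda>y. h t x v - \<phi> t x v \<le> h t y v - \<phi> t y v) (nhds x)"
    and min_v: "eventually (\<lambda>w. h t x v - \<phi> t x v \<le> h t x w - \<phi> t x w) (nhds v)"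
  shows "Rcoef \<beta> h t x * ((\<Sum>i\<in>UNIV. \<phi>H (axis i 1) $ i) - v \<bullet> \<phi>v v) \<le> \<phi>t + v \<bullet> \<phi>x"
proof -
  obtain ht hx hv hH where pde: "\<forall>t\<in>{0<..T}. \<forall>x v.
        ((\<lambda>s. h s x v) has_real_derivative ht t x v) (at t within {0..T}) \<and>
        ((\<lambda>y. h t y v) has_derivative (\<lambda>y. hx t x v \<bullet> y)) (at x) \<and>
        ((\<lambda>w. h t x w) has_derivative (\<lambda>w. hv t x v \<bullet> w)) (at v) \<and>
        ((\<lambda>w. hv t x w) has_derivative hH t x v) (at v) \<and>
        ht t x v + v \<bullet> hx t x v =
          Rcoef \<beta> h t x * ((\<Sum>i\<in>UNIV. hH t x v (axis i 1) $ i) - v \<bullet> hv t x v)"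
    using sol unfolding classical_solution_def by blast
  have "t \<in> {0<..T}"
    using \<open>0 < t\<close> \<open>t \<le> T\<close> by simp
  with pde have h_t: "((\<lambda>s. h s x v) has_real_derivative ht t x v) (at t within {0..T})"
    and h_x: "((\<lambda>y. h t y v) has_derivative (\<lambda>u. hx t x v \<bullet> u)) (at x)"
    and h_v: "\<And>w. ((\<lambda>w. h t x w) has_derivative (\<lambda>u. hv t x w \<bullet> u)) (at w)"
    and h_vv: "(hv t x has_derivative hH t x v) (at v)"
    and eq: "ht t x v + v \<bullet> hx t x v = Rcoef \<beta> h t x * ((\<Sum>i\<in>UNIV. hH t x v (axis i 1) $ i) - v \<bullet> hv t x v)"
    by auto
  show ?thesis
    by (rule solution_touching_from_below[OF \<open>0 < t\<close> \<open>t \<le> T\<close> h_t \<phi>_t h_x \<phi>_x h_v \<phi>_v h_vv \<phi>_vv eq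
          Rcoef_nonneg min_t min_x min_v])
qed

definition barrier :: "real \<Rightarrow> real \<Rightarrow> real \<Rightarrow> real \<Rightarrow> 'a::real_inner \<Rightarrow> 'a \<Rightarrow> real \<Rightarrow> 'a \<Rightarrow> 'a \<Rightarrow> real" where
  "barrier \<delta> \<kappa> \<tau> r x0 v0 t x v =
     \<delta> * (1 - (norm (x - x0 - t *\<^sub>R v) / r)\<^sup>2 - (\<tau> * norm (v - v0) / r)\<^sup>2 - \<kappa> * t)"

lemma barrier_eq_inner:
  "barrier \<delta> \<kappa> \<tau> r x0 v0 t x v =
     \<delta> * (1 - (x - x0 - t *\<^sub>R v) \<bullet> (x - x0 - t *\<^sub>R v) / r\<^sup>2 - \<tau>\<^sup>2 * ((v - v0) \<bullet> (v - v0)) / r\<^sup>2 - \<kappa> * t)"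
  by (simp add: barrier_def power_divide power_mult_distrib power2_norm_eq_inner)

lemma barrier_has_real_derivative_t:
  assumes "r \<noteq> 0"
  shows "((\<lambda>s. barrier \<delta> \<kappa> \<tau> r x0 v0 s x v) has_real_derivative
           \<delta> * (2 * ((x - x0 - t *\<^sub>R v) \<bullet> v) / r\<^sup>2 - \<kappa>)) (at t within X)"
  unfolding barrier_eq_inner using assms
  by (auto intro!: derivative_eq_intros simp: inner_add_right inner_diff_right inner_add_left inner_diff_left
             inner_scaleR_right inner_scaleR_left inner_commute power2_eq_square)
     (simp add: field_simps)

lemma barrier_has_derivative_x:
  assumes "r \<noteq> 0"
  shows "((\<lambda>y. barrier \<delta> \<kappa> \<tau> r x0 v0 t y v) has_derivative
           (\<lambda>u. ((- 2 * \<delta> / r\<^sup>2) *\<^sub>R (x - x0 - t *\<^sub>R v)) \<bullet> u)) (at x)"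
  unfolding barrier_eq_inner using assms
  by (auto intro!: derivative_eq_intros ext simp: inner_add_right inner_diff_right inner_add_left inner_diff_left
             inner_scaleR_right inner_scaleR_left inner_commute power2_eq_square)

lemma barrier_has_derivative_v:
  assumes "r \<noteq> 0"
  shows "((\<lambda>w. barrier \<delta> \<kappa> \<tau> r x0 v0 t x w) has_derivative
           (\<lambda>u. (\<delta> *\<^sub>R ((2 * t / r\<^sup>2) *\<^sub>R (x - x0 - t *\<^sub>R v) - (2 * \<tau>\<^sup>2 / r\<^sup>2) *\<^sub>R (v - v0))) \<bullet> u)) (at v)"
  unfolding barrier_eq_inner using assms
  by (auto intro!: derivative_eq_intros ext simp: inner_add_right inner_diff_right inner_add_left inner_diff_left
             inner_scaleR_right inner_scaleR_left inner_commute power2_eq_square)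
     (simp add: field_simps)

lemma barrier_gradient_v_has_derivative:
  "((\<lambda>w. \<delta> *\<^sub>R ((2 * t / r\<^sup>2) *\<^sub>R (x - x0 - t *\<^sub>R w) - (2 * \<tau>\<^sup>2 / r\<^sup>2) *\<^sub>R (w - v0)))
     has_derivative (\<lambda>u. (- 2 * \<delta> * (t\<^sup>2 + \<tau>\<^sup>2) / r\<^sup>2) *\<^sub>R u)) (at v)"
  by (auto intro!: derivative_eq_intros ext simp: algebra_simps power2_eq_square diff_divide_distrib add_divide_distrib)

lemma barrier_le:
  assumes "0 \<le> \<delta>" "0 \<le> \<kappa> * t"
  shows "barrier \<delta> \<kappa> \<tau> r x0 v0 t x v \<le> \<delta>"
proof -
  have "1 - (norm (x - x0 - t *\<^sub>R v) / r)\<^sup>2 - (\<tau> * norm (v - v0) / r)\<^sup>2 - \<kappa> * t \<le> 1"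
    using assms(2) zero_le_power2[of "norm (x - x0 - t *\<^sub>R v) / r"] zero_le_power2[of "\<tau> * norm (v - v0) / r"]
    by linarith
  then have "\<delta> * (1 - (norm (x - x0 - t *\<^sub>R v) / r)\<^sup>2 - (\<tau> * norm (v - v0) / r)\<^sup>2 - \<kappa> * t) \<le> \<delta> * 1"
    using assms(1) by (rule mult_left_mono)
  then show ?thesis
    unfolding barrier_def by simp
qed

lemma barrier_pos_imp_norm_less:
  assumes "0 < barrier \<delta> \<kappa> \<tau> r x0 v0 t x v" "0 < \<delta>" "0 < r" "0 < \<tau>" "0 \<le> \<kappa>" "0 \<le> t"
  shows "norm (x - x0 - t *\<^sub>R v) < r" "norm (v - v0) < r / \<tau>"
    and "norm (x - x0) < r + t * (norm v0 + r / \<tau>)"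
proof -
  have "0 < 1 - (norm (x - x0 - t *\<^sub>R v) / r)\<^sup>2 - (\<tau> * norm (v - v0) / r)\<^sup>2 - \<kappa> * t"
    using assms(1,2) by (simp add: barrier_def zero_less_mult_iff)
  then have "(norm (x - x0 - t *\<^sub>R v) / r)\<^sup>2 < 1" "(\<tau> * norm (v - v0) / r)\<^sup>2 < 1"
    using mult_nonneg_nonneg[OF assms(5,6)]
      zero_le_power2[of "norm (x - x0 - t *\<^sub>R v) / r"] zero_le_power2[of "\<tau> * norm (v - v0) / r"]
    by linarith+
  then have "norm (x - x0 - t *\<^sub>R v) / r < 1" "\<tau> * norm (v - v0) / r < 1"
    using assms(3,4) by (auto simp: abs_square_less_1)
  then show Y: "norm (x - x0 - t *\<^sub>R v) < r" and W: "norm (v - v0) < r / \<tau>"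
    using assms(3,4) by (simp_all add: field_simps)
  have "norm (x - x0) \<le> norm (x - x0 - t *\<^sub>R v) + t * norm v"
    using norm_triangle_ineq[of "x - x0 - t *\<^sub>R v" "t *\<^sub>R v"] assms(6) by simp
  also have "\<dots> < r + t * (norm v0 + r / \<tau>)"
    using Y W norm_triangle_ineq[of v0 "v - v0"] assms(6) by (intro add_less_le_mono mult_left_mono) auto
  finally show "norm (x - x0) < r + t * (norm v0 + r / \<tau>)" .
qed

lemma barrier_gt_delta_div_eight:
  assumes "0 < \<delta>" "0 < r" "0 < \<tau>" "norm (x - x0 - t *\<^sub>R v) < r / 2" "norm (v - v0) < r / (2 * \<tau>)"
    and "\<kappa> * t \<le> 3 / 8"
  shows "\<delta> / 8 < barrier \<delta> \<kappa> \<tau> r x0 v0 t x v"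
proof -
  have "norm (x - x0 - t *\<^sub>R v) / r < 1 / 2" "\<tau> * norm (v - v0) / r < 1 / 2"
    using assms(2-5) by (simp_all add: field_simps)
  then have "(norm (x - x0 - t *\<^sub>R v) / r)\<^sup>2 < (1 / 2)\<^sup>2" "(\<tau> * norm (v - v0) / r)\<^sup>2 < (1 / 2)\<^sup>2"
    using assms(2,3) by (intro power_strict_mono; simp)+
  then have "1 / 8 < 1 - (norm (x - x0 - t *\<^sub>R v) / r)\<^sup>2 - (\<tau> * norm (v - v0) / r)\<^sup>2 - \<kappa> * t"
    using assms(6) by (simp add: power_divide)
  then have "\<delta> * (1 / 8) < \<delta> * (1 - (norm (x - x0 - t *\<^sub>R v) / r)\<^sup>2 - (\<tau> * norm (v - v0) / r)\<^sup>2 - \<kappa> * t)"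
    using assms(1) by (rule mult_strict_left_mono)
  then show ?thesis
    unfolding barrier_def by simp
qed

lemma barrier_diffusion_bound:
  fixes Y v v0 :: "'a::real_inner" and n :: real
  assumes "0 < r" "0 < \<tau>" "0 \<le> t" "t \<le> \<tau>" "0 \<le> n"
    and Y: "norm Y < r" and W: "norm (v - v0) < r / \<tau>"
  shows "2 * n * (t\<^sup>2 + \<tau>\<^sup>2) / r\<^sup>2 + 2 * t / r\<^sup>2 * (v \<bullet> Y) - 2 * \<tau>\<^sup>2 / r\<^sup>2 * (v \<bullet> (v - v0))
           \<le> 4 * n * (\<tau> / r)\<^sup>2 + 4 * (\<tau> / r) * norm v0 + 4"
proof -
  have "2 * n * (t\<^sup>2 + \<tau>\<^sup>2) / r\<^sup>2 \<le> 4 * n * (\<tau> / r)\<^sup>2"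
  proof -
    have "t\<^sup>2 \<le> \<tau>\<^sup>2"
      using assms(3,4) by (intro power_mono) auto
    then show ?thesis
      using assms(5) by (simp add: power_divide divide_right_mono mult_left_mono algebra_simps)
  qed
  moreover have "2 * t / r\<^sup>2 * (v \<bullet> Y) \<le> 2 * \<tau> * norm v / r"
  proof -
    have "v \<bullet> Y \<le> norm v * r"
      using norm_cauchy_schwarz[of v Y] Y by (smt (verit) mult_left_mono norm_ge_zero)
    then have "2 * t / r\<^sup>2 * (v \<bullet> Y) \<le> 2 * t / r\<^sup>2 * (norm v * r)"
      using assms(3) by (intro mult_left_mono) auto
    also have "\<dots> \<le> 2 * \<tau> / r\<^sup>2 * (norm v * r)"
      using assms(1,4) by (intro mult_right_mono divide_right_mono) auto
    finally show ?thesis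
      using assms(1) by (simp add: power2_eq_square)
  qed
  moreover have "- (2 * \<tau>\<^sup>2 / r\<^sup>2 * (v \<bullet> (v - v0))) \<le> 2 * \<tau> * norm v / r"
  proof -
    have "- (v \<bullet> (v - v0)) \<le> norm v * (r / \<tau>)"
      using Cauchy_Schwarz_ineq2[of v "v - v0"] W by (smt (verit) mult_left_mono norm_ge_zero)
    then have "2 * \<tau>\<^sup>2 / r\<^sup>2 * (- (v \<bullet> (v - v0))) \<le> 2 * \<tau>\<^sup>2 / r\<^sup>2 * (norm v * (r / \<tau>))"
      by (intro mult_left_mono) auto
    also have "\<dots> = 2 * \<tau> * norm v / r"
      using assms(1,2) by (simp add: power2_eq_square field_simps)
    finally show ?thesis
      by simp
  qed
  moreover have "4 * \<tau> * norm v / r \<le> 4 * (\<tau> / r) * norm v0 + 4"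
  proof -
    have "norm v \<le> norm v0 + r / \<tau>"
      using norm_triangle_ineq[of v0 "v - v0"] W by simp
    then have "4 * (\<tau> / r) * norm v \<le> 4 * (\<tau> / r) * (norm v0 + r / \<tau>)"
      using assms(1,2) by (intro mult_left_mono) auto
    also have "\<dots> = 4 * (\<tau> / r) * norm v0 + 4"
      using assms(1,2) by (simp add: field_simps)
    finally show ?thesis
      by simp
  qed
  ultimately show ?thesis
    by linarith
qed

lemma box_minimum_imp_partial_minima:
  fixes F :: "real \<Rightarrow> 'a::metric_space \<Rightarrow> 'b::metric_space \<Rightarrow> real"
  assumes min: "\<And>t' x' v'. (t', x', v') \<in> {0..s} \<times> cball a R \<times> cball b \<rho> \<Longrightarrow> F t x v \<le> F t' x' v'"
    and t: "t \<in> {0..s}" and x: "x \<in> ball a R" and v: "v \<in> ball b \<rho>"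
  shows "\<And>s'. 0 \<le> s' \<Longrightarrow> s' \<le> t \<Longrightarrow> F t x v \<le> F s' x v"
    and "eventually (\<lambda>y. F t x v \<le> F t y v) (nhds x)"
    and "eventually (\<lambda>w. F t x v \<le> F t x w) (nhds v)"
proof -
  show "F t x v \<le> F s' x v" if "0 \<le> s'" "s' \<le> t" for s'
    using min[of s' x v] that t x v by auto
  have "eventually (\<lambda>y. y \<in> ball a R) (nhds x)"
    using x by (intro eventually_nhds_in_open) auto
  then show "eventually (\<lambda>y. F t x v \<le> F t y v) (nhds x)"
    by (rule eventually_mono) (use min t v in auto)
  have "eventually (\<lambda>w. w \<in> ball b \<rho>) (nhds v)"
    using v by (intro eventually_nhds_in_open) auto
  then show "eventually (\<lambda>w. F t x v \<le> F t x w) (nhds v)"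
    by (rule eventually_mono) (use min t x in auto)
qed

lemma barrier_touching_point:
  fixes h :: "real \<Rightarrow> 'a::euclidean_space \<Rightarrow> 'a \<Rightarrow> real" and \<delta> \<kappa> \<tau> r :: real and x0 v0 :: 'a
  defines "F \<equiv> \<lambda>t x v. h t x v - barrier \<delta> \<kappa> \<tau> r x0 v0 t x v"
  assumes cont: "continuous_on ({0..T} \<times> UNIV \<times> UNIV) (\<lambda>(t, x, v). h t x v)"
    and nonneg: "\<And>t x v. t \<in> {0..T} \<Longrightarrow> 0 \<le> h t x v"
    and init: "\<And>x v. norm (x - x0) < r \<Longrightarrow> norm (v - v0) < r / \<tau> \<Longrightarrow> \<delta> \<le> h 0 x v"
    and "0 < \<delta>" "0 < r" "0 < \<tau>" "0 \<le> \<kappa>" "0 \<le> s" "s \<le> T"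
    and "F s y w < 0"
  obtains t x v where "0 < t" "t \<le> s" "norm (x - x0 - t *\<^sub>R v) < r" "norm (v - v0) < r / \<tau>"
    and "\<And>s'. 0 \<le> s' \<Longrightarrow> s' \<le> t \<Longrightarrow> F t x v \<le> F s' x v"
    and "eventually (\<lambda>y. F t x v \<le> F t y v) (nhds x)"
    and "eventually (\<lambda>w. F t x v \<le> F t x w) (nhds v)"
proof -
  define Rx where "Rx = r + s * (norm v0 + r / \<tau>)"
  define S where "S = {0..s} \<times> cball x0 Rx \<times> cball v0 (r / \<tau>)"
  have near: "norm (x - x0 - t *\<^sub>R v) < r \<and> norm (v - v0) < r / \<tau> \<and> x \<in> ball x0 Rx \<and> v \<in> ball v0 (r / \<tau>)"
    if "0 \<le> t" "t \<le> s" "F t x v < 0" for t x v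
  proof -
    have "0 < barrier \<delta> \<kappa> \<tau> r x0 v0 t x v"
      using that nonneg[of t x v] \<open>s \<le> T\<close> unfolding F_def by fastforce
    note bounds = barrier_pos_imp_norm_less[OF this \<open>0 < \<delta>\<close> \<open>0 < r\<close> \<open>0 < \<tau>\<close> \<open>0 \<le> \<kappa>\<close> \<open>0 \<le> t\<close>]
    have "r + t * (norm v0 + r / \<tau>) \<le> Rx"
      unfolding Rx_def using \<open>t \<le> s\<close> \<open>0 < r\<close> \<open>0 < \<tau>\<close> by (intro add_left_mono mult_right_mono) auto
    then show ?thesis
      using bounds by (simp add: dist_norm norm_minus_commute)
  qed
  have "continuous_on S (\<lambda>(t, x, v). F t x v)"
  proof -
    have "continuous_on S (\<lambda>(t, x, v). h t x v)"
      by (rule continuous_on_subset[OF cont]) (use \<open>s \<le> T\<close> in \<open>auto simp: S_def\<close>)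
    then show ?thesis
      unfolding F_def barrier_def case_prod_beta using \<open>0 < r\<close> by (intro continuous_intros) auto
  qed
  moreover have "compact S"
    unfolding S_def by (intro compact_Times compact_Icc compact_cball)
  moreover have "(s, y, w) \<in> S"
    using near[OF \<open>0 \<le> s\<close> order.refl \<open>F s y w < 0\<close>] \<open>0 \<le> s\<close> unfolding S_def by auto
  ultimately obtain p where "p \<in> S" and p_min: "\<forall>q\<in>S. (\<lambda>(t, x, v). F t x v) p \<le> (\<lambda>(t, x, v). F t x v) q"
    using continuous_attains_inf[of S "\<lambda>(t, x, v). F t x v"] by blast
  obtain t x v where p: "p = (t, x, v)"
    by (cases p) auto
  have min: "\<And>t' x' v'. (t', x', v') \<in> S \<Longrightarrow> F t x v \<le> F t' x' v'"
    using p_min unfolding p by fastforce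
  have t: "t \<in> {0..s}"
    using \<open>p \<in> S\<close> unfolding p S_def by auto
  have "F t x v < 0"
    using min[OF \<open>(s, y, w) \<in> S\<close>] \<open>F s y w < 0\<close> by simp
  note near = near[of t x v, OF _ _ this]
  have "0 < t"
  proof (rule ccontr)
    assume "\<not> 0 < t"
    with t near have "t = 0" "\<delta> \<le> h t x v"
      using init by auto
    with barrier_le[of \<delta> \<kappa> t \<tau> r x0 v0 x v] \<open>0 < \<delta>\<close> \<open>F t x v < 0\<close> show False
      unfolding F_def by auto
  qed
  have "x \<in> ball x0 Rx" "v \<in> ball v0 (r / \<tau>)"
    using near t by auto
  note partial_minima = box_minimum_imp_partial_minima[where F = F, OF min[unfolded S_def] t this]
  show thesis
    by (rule that[OF \<open>0 < t\<close> _ _ _ partial_minima]) (use near t in auto)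
qed

(* The left side is (d_t + v.grad_x) psi and the bracket on the right is (Delta_v - v.grad_v) psi,
   with the derivatives computed above. *)
lemma barrier_strict_subsolution:
  fixes x x0 v v0 :: "real^'n"
  assumes "0 < \<delta>" "0 < r" "0 < \<tau>" "0 \<le> t" "t \<le> \<tau>"
    and Y: "norm (x - x0 - t *\<^sub>R v) < r" and W: "norm (v - v0) < r / \<tau>"
    and "0 \<le> R" "R \<le> M"
    and \<kappa>: "M * (4 * real CARD('n) * (\<tau> / r)\<^sup>2 + 4 * (\<tau> / r) * norm v0 + 4) < \<kappa>"
  shows "\<delta> * (2 * ((x - x0 - t *\<^sub>R v) \<bullet> v) / r\<^sup>2 - \<kappa>) + v \<bullet> ((- 2 * \<delta> / r\<^sup>2) *\<^sub>R (x - x0 - t *\<^sub>R v))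
         < R * ((\<Sum>i::'n\<in>UNIV. ((- 2 * \<delta> * (t\<^sup>2 + \<tau>\<^sup>2) / r\<^sup>2) *\<^sub>R axis i 1) $ i)
                - v \<bullet> (\<delta> *\<^sub>R ((2 * t / r\<^sup>2) *\<^sub>R (x - x0 - t *\<^sub>R v) - (2 * \<tau>\<^sup>2 / r\<^sup>2) *\<^sub>R (v - v0))))"
proof -
  define B where "B = 4 * real CARD('n) * (\<tau> / r)\<^sup>2 + 4 * (\<tau> / r) * norm v0 + 4"
  define D where "D = 2 * real CARD('n) * (t\<^sup>2 + \<tau>\<^sup>2) / r\<^sup>2 + 2 * t / r\<^sup>2 * (v \<bullet> (x - x0 - t *\<^sub>R v))
                       - 2 * \<tau>\<^sup>2 / r\<^sup>2 * (v \<bullet> (v - v0))"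
  have transport: "\<delta> * (2 * (Z \<bullet> v) / r\<^sup>2 - \<kappa>) + v \<bullet> ((- 2 * \<delta> / r\<^sup>2) *\<^sub>R Z) = - \<delta> * \<kappa>"
    for Z :: "real^'n"
    using \<open>0 < r\<close> by (simp add: inner_commute field_simps)
  have diffusion: "(\<Sum>i::'n\<in>UNIV. ((- 2 * \<delta> * (t\<^sup>2 + \<tau>\<^sup>2) / r\<^sup>2) *\<^sub>R axis i 1) $ i)
             - v \<bullet> (\<delta> *\<^sub>R ((2 * t / r\<^sup>2) *\<^sub>R Z - (2 * \<tau>\<^sup>2 / r\<^sup>2) *\<^sub>R Z'))
        = - \<delta> * (2 * real CARD('n) * (t\<^sup>2 + \<tau>\<^sup>2) / r\<^sup>2 + 2 * t / r\<^sup>2 * (v \<bullet> Z) - 2 * \<tau>\<^sup>2 / r\<^sup>2 * (v \<bullet> Z'))"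
    for Z Z' :: "real^'n"
    using \<open>0 < r\<close> by (simp add: inner_diff_right field_simps)
  have "0 \<le> B"
    using \<open>0 < r\<close> \<open>0 < \<tau>\<close> by (simp add: B_def)
  have "R * D \<le> R * B"
    unfolding D_def B_def using barrier_diffusion_bound[OF \<open>0 < r\<close> \<open>0 < \<tau>\<close> \<open>0 \<le> t\<close> \<open>t \<le> \<tau>\<close> _ Y W] \<open>0 \<le> R\<close>
    by (intro mult_left_mono) auto
  also have "\<dots> \<le> M * B"
    using \<open>R \<le> M\<close> \<open>0 \<le> B\<close> by (rule mult_right_mono)
  finally have "R * D < \<kappa>"
    using \<kappa> unfolding B_def by simp
  then have "- \<delta> * \<kappa> < R * (- \<delta> * D)"
    using \<open>0 < \<delta>\<close> by (simp add: algebra_simps)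
  then show ?thesis
    unfolding transport diffusion D_def .
qed

lemma barrier_le_solution:
  fixes h :: "real \<Rightarrow> real^'n \<Rightarrow> real^'n \<Rightarrow> real"
  assumes sol: "classical_solution \<beta> T h" and "0 \<le> \<beta>" "\<beta> \<le> 1"
    and bound: "\<And>t x v. t \<in> {0..T} \<Longrightarrow> h t x v \<le> Lam"
    and init: "\<And>x v. torus_dist x x0 < r \<Longrightarrow> norm (v - v0) < r / \<tau> \<Longrightarrow> \<delta> \<le> h 0 x v"
    and "0 < \<delta>" "0 < r" "0 < \<tau>"
    and \<kappa>: "max 1 (Lam * integral\<^sup>L lborel (gauss :: real^'n \<Rightarrow> real))
              * (4 * real CARD('n) * (\<tau> / r)\<^sup>2 + 4 * (\<tau> / r) * norm v0 + 4) < \<kappa>"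
    and "0 \<le> s" "s \<le> T" "s \<le> \<tau>"
  shows "barrier \<delta> \<kappa> \<tau> r x0 v0 s y w \<le> h s y w"
proof (rule ccontr)
  have "0 \<le> max 1 (Lam * integral\<^sup>L lborel (gauss :: real^'n \<Rightarrow> real))
              * (4 * real CARD('n) * (\<tau> / r)\<^sup>2 + 4 * (\<tau> / r) * norm v0 + 4)"
    using \<open>0 < r\<close> \<open>0 < \<tau>\<close> by (intro mult_nonneg_nonneg) auto
  then have "0 \<le> \<kappa>"
    using \<kappa> by linarith
  have nonneg: "\<And>t x v. t \<in> {0..T} \<Longrightarrow> 0 \<le> h t x v"
    and cont: "continuous_on ({0..T} \<times> UNIV \<times> UNIV) (\<lambda>(t, x, v). h t x v)"
    using sol unfolding classical_solution_def by auto
  have init': "\<delta> \<le> h 0 x v" if "norm (x - x0) < r" "norm (v - v0) < r / \<tau>" for x v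
    using init torus_dist_le_norm[of x x0] that by fastforce
  assume "\<not> barrier \<delta> \<kappa> \<tau> r x0 v0 s y w \<le> h s y w"
  then have "h s y w - barrier \<delta> \<kappa> \<tau> r x0 v0 s y w < 0"
    by simp
  from barrier_touching_point[OF cont nonneg init' \<open>0 < \<delta>\<close> \<open>0 < r\<close> \<open>0 < \<tau>\<close> \<open>0 \<le> \<kappa>\<close> \<open>0 \<le> s\<close> \<open>s \<le> T\<close> this]
  obtain t x v where "0 < t" "t \<le> s" and Y: "norm (x - x0 - t *\<^sub>R v) < r" and W: "norm (v - v0) < r / \<tau>"
    and min_t: "\<And>s'. 0 \<le> s' \<Longrightarrow> s' \<le> t \<Longrightarrow>
        h t x v - barrier \<delta> \<kappa> \<tau> r x0 v0 t x v \<le> h s' x v - barrier \<delta> \<kappa> \<tau> r x0 v0 s' x v"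
    and min_x: "eventually (\<lambda>y. h t x v - barrier \<delta> \<kappa> \<tau> r x0 v0 t x v \<le> h t y v - barrier \<delta> \<kappa> \<tau> r x0 v0 t y v) (nhds x)"
    and min_v: "eventually (\<lambda>w. h t x v - barrier \<delta> \<kappa> \<tau> r x0 v0 t x v \<le> h t x w - barrier \<delta> \<kappa> \<tau> r x0 v0 t x w) (nhds v)"
    by blast
  have "t \<le> T" "r \<noteq> 0"
    using \<open>t \<le> s\<close> \<open>s \<le> T\<close> \<open>0 < r\<close> by simp_all
  have R_le: "Rcoef \<beta> h t x \<le> max 1 (Lam * integral\<^sup>L lborel (gauss :: real^'n \<Rightarrow> real))"
    by (rule Rcoef_le[OF \<open>0 \<le> \<beta>\<close> \<open>\<beta> \<le> 1\<close>]) (use nonneg bound \<open>0 < t\<close> \<open>t \<le> T\<close> in auto)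
  have "Rcoef \<beta> h t x * ((\<Sum>i::'n\<in>UNIV. ((- 2 * \<delta> * (t\<^sup>2 + \<tau>\<^sup>2) / r\<^sup>2) *\<^sub>R axis i 1) $ i)
             - v \<bullet> (\<delta> *\<^sub>R ((2 * t / r\<^sup>2) *\<^sub>R (x - x0 - t *\<^sub>R v) - (2 * \<tau>\<^sup>2 / r\<^sup>2) *\<^sub>R (v - v0))))
        \<le> \<delta> * (2 * ((x - x0 - t *\<^sub>R v) \<bullet> v) / r\<^sup>2 - \<kappa>) + v \<bullet> ((- 2 * \<delta> / r\<^sup>2) *\<^sub>R (x - x0 - t *\<^sub>R v))"
    by (rule classical_solution_touching_from_below[where \<phi> = "barrier \<delta> \<kappa> \<tau> r x0 v0",
          OF sol \<open>0 < t\<close> \<open>t \<le> T\<close> barrier_has_real_derivative_t[OF \<open>r \<noteq> 0\<close>]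
          barrier_has_derivative_x[OF \<open>r \<noteq> 0\<close>] barrier_has_derivative_v[OF \<open>r \<noteq> 0\<close>]
          barrier_gradient_v_has_derivative min_t min_x min_v])
  moreover have "0 \<le> t" "t \<le> \<tau>"
    using \<open>0 < t\<close> \<open>t \<le> s\<close> \<open>s \<le> \<tau>\<close> by simp_all
  ultimately show False
    using barrier_strict_subsolution[OF \<open>0 < \<delta>\<close> \<open>0 < r\<close> \<open>0 < \<tau>\<close> _ _ Y W Rcoef_nonneg R_le \<kappa>] by simp
qed

lemma solution_ge_delta_div_eight:
  fixes h :: "real \<Rightarrow> real^'n \<Rightarrow> real^'n \<Rightarrow> real"
  assumes sol: "classical_solution \<beta> T h" and "0 \<le> \<beta>" "\<beta> \<le> 1"
    and bound: "\<And>t x v. t \<in> {0..T} \<Longrightarrow> h t x v \<le> Lam"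
    and init: "\<And>x v. torus_dist x x0 < r \<Longrightarrow> norm (v - v0) < r / \<tau> \<Longrightarrow> \<delta> \<le> h 0 x v"
    and "0 < \<delta>" "0 < r" "0 < \<tau>"
    and \<kappa>: "max 1 (Lam * integral\<^sup>L lborel (gauss :: real^'n \<Rightarrow> real))
              * (4 * real CARD('n) * (\<tau> / r)\<^sup>2 + 4 * (\<tau> / r) * norm v0 + 4) < \<kappa>"
    and "0 \<le> t" "t \<le> T" "t \<le> \<tau>" "\<kappa> * t \<le> 3 / 8"
    and x: "torus_dist x (x0 + t *\<^sub>R v) < r / 2" and v: "norm (v - v0) < r / (2 * \<tau>)"
  shows "\<delta> / 8 \<le> h t x v"
proof -
  obtain k where "int_vec k" and k: "norm (x - k - x0 - t *\<^sub>R v) < r / 2"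
    using torus_dist_lessE[OF x] by (auto simp: algebra_simps)
  have "\<delta> / 8 < barrier \<delta> \<kappa> \<tau> r x0 v0 t (x - k) v"
    by (rule barrier_gt_delta_div_eight[OF \<open>0 < \<delta>\<close> \<open>0 < r\<close> \<open>0 < \<tau>\<close> k v \<open>\<kappa> * t \<le> 3 / 8\<close>])
  also have "\<dots> \<le> h t (x - k) v"
    by (rule barrier_le_solution[OF sol \<open>0 \<le> \<beta>\<close> \<open>\<beta> \<le> 1\<close> bound init \<open>0 < \<delta>\<close> \<open>0 < r\<close> \<open>0 < \<tau>\<close> \<kappa>
          \<open>0 \<le> t\<close> \<open>t \<le> T\<close> \<open>t \<le> \<tau>\<close>])
  also have "\<dots> = h t x v"
    using sol \<open>int_vec k\<close> unfolding classical_solution_def by (metis diff_add_cancel)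
  finally show ?thesis
    by simp
qed

lemma barrier_rate_lt_bracket:
  fixes M n a b :: real
  assumes "1 \<le> M" "0 \<le> n"
  shows "M * (4 * n * a\<^sup>2 + 4 * a * b + 4) < (M * (4 * n + 8) + 1) * (jbr a * jbr b)\<^sup>2"
proof -
  define P where "P = (jbr a * jbr b)\<^sup>2"
  have "P = 1 + a\<^sup>2 + b\<^sup>2 + a\<^sup>2 * b\<^sup>2"
    by (simp add: P_def power_mult_distrib power2_jbr algebra_simps)
  moreover have "0 \<le> a\<^sup>2 * b\<^sup>2"
    by simp
  ultimately have "1 \<le> P" "a\<^sup>2 \<le> P" "a\<^sup>2 + b\<^sup>2 \<le> P"
    by (auto simp: add_nonneg_nonneg)
  moreover have "2 * a * b \<le> a\<^sup>2 + b\<^sup>2"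
    using sum_squares_bound[of a b] by simp
  moreover have "4 * n * a\<^sup>2 \<le> 4 * n * P"
    using assms(2) \<open>a\<^sup>2 \<le> P\<close> by (intro mult_left_mono) auto
  ultimately have "4 * n * a\<^sup>2 + 4 * a * b + 4 \<le> (4 * n + 8) * P"
    by (simp add: algebra_simps)
  then have "M * (4 * n * a\<^sup>2 + 4 * a * b + 4) \<le> M * ((4 * n + 8) * P)"
    using assms(1) by (intro mult_left_mono) auto
  also have "\<dots> < (M * (4 * n + 8) + 1) * P"
    using \<open>1 \<le> P\<close> by (simp add: algebra_simps)
  finally show ?thesis
    unfolding P_def .
qed

lemma jbr_time_bound:
  assumes "0 < C" "t \<le> 3 / (8 * C) * jbr a powr (-2) * jbr b powr (-2)"
  shows "C * (jbr a * jbr b)\<^sup>2 * t \<le> 3 / 8"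
proof -
  have "0 < (jbr a * jbr b)\<^sup>2"
    using jbr_pos[of a] jbr_pos[of b] by simp
  then show ?thesis
    using assms by (simp add: jbr_powr_minus_two power_mult_distrib field_simps)
qed

theorem lemma4p5:
  fixes \<beta> lam Lam :: real
  assumes "0 \<le> \<beta>" "\<beta> \<le> 1" "0 < lam" "lam < Lam"
  shows "\<exists>c0>0. \<forall>T \<delta> \<tau> r (x0 :: real^'n) (v0 :: real^'n) (h :: real \<Rightarrow> real^'n \<Rightarrow> real^'n \<Rightarrow> real).
           0 < T \<longrightarrow> \<delta> \<in> {0<..1} \<longrightarrow> \<tau> \<in> {0<..1} \<longrightarrow> r \<in> {0<..1} \<longrightarrow>
           classical_solution \<beta> T h \<longrightarrow>
           (\<forall>t\<in>{0..T}. \<forall>x v. h t x v \<le> Lam) \<longrightarrow>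
           (\<forall>x v. torus_dist x x0 < r \<and> norm (v - v0) < r / \<tau> \<longrightarrow> \<delta> \<le> h 0 x v) \<longrightarrow>
           (\<forall>t x v. 0 \<le> t \<and>
               t \<le> min T (min \<tau> (c0 * (jbr (\<tau> / r)) powr (-2) * (jbr (norm v0)) powr (-2))) \<and>
               torus_dist x (x0 + t *\<^sub>R v) < r / 2 \<and> norm (v - v0) < r / (2 * \<tau>)
             \<longrightarrow> \<delta> / 8 \<le> h t x v)"
proof -
  define M where "M = max 1 (Lam * integral\<^sup>L lborel (gauss :: real^'n \<Rightarrow> real))"
  define C where "C = M * (4 * real CARD('n) + 8) + 1"
  have "1 \<le> M" "0 < C"
    unfolding C_def M_def by (auto intro: add_nonneg_pos)
  show ?thesis
  proof (intro exI[of _ "3 / (8 * C)"] conjI allI impI)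
    show "0 < 3 / (8 * C)"
      using \<open>0 < C\<close> by simp
    fix T \<delta> \<tau> r t :: real and x0 v0 x v :: "real^'n" and h :: "real \<Rightarrow> real^'n \<Rightarrow> real^'n \<Rightarrow> real"
    assume "0 < T" "\<delta> \<in> {0<..1}" "\<tau> \<in> {0<..1}" "r \<in> {0<..1}" and sol: "classical_solution \<beta> T h"
      and bound: "\<forall>t\<in>{0..T}. \<forall>x v. h t x v \<le> Lam"
      and init: "\<forall>x v. torus_dist x x0 < r \<and> norm (v - v0) < r / \<tau> \<longrightarrow> \<delta> \<le> h 0 x v"
      and txv: "0 \<le> t \<and> t \<le> min T (min \<tau> (3 / (8 * C) * jbr (\<tau> / r) powr (-2) * jbr (norm v0) powr (-2))) \<and>
        torus_dist x (x0 + t *\<^sub>R v) < r / 2 \<and> norm (v - v0) < r / (2 * \<tau>)"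
    have "0 < \<delta>" "0 < \<tau>" "0 < r"
      using \<open>\<delta> \<in> {0<..1}\<close> \<open>\<tau> \<in> {0<..1}\<close> \<open>r \<in> {0<..1}\<close> by auto
    define \<kappa> where "\<kappa> = C * (jbr (\<tau> / r) * jbr (norm v0))\<^sup>2"
    have rate: "M * (4 * real CARD('n) * (\<tau> / r)\<^sup>2 + 4 * (\<tau> / r) * norm v0 + 4) < \<kappa>"
      unfolding \<kappa>_def C_def by (rule barrier_rate_lt_bracket[OF \<open>1 \<le> M\<close>]) simp
    have "\<kappa> * t \<le> 3 / 8"
      unfolding \<kappa>_def using jbr_time_bound[OF \<open>0 < C\<close>] txv by simp
    then show "\<delta> / 8 \<le> h t x v"
      by (intro solution_ge_delta_div_eight[OF sol \<open>0 \<le> \<beta>\<close> \<open>\<beta> \<le> 1\<close> _ _ \<open>0 < \<delta>\<close> \<open>0 < r\<close> \<open>0 < \<tau>\<close> rate[unfolded M_def]])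
         (use bound init txv in auto)
  qed
qed

end
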